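(* Let $P$ be an arbitrary set of atomic propositions and let $\mathcal{C}: 2^P \to 2^P$ be a C-logics over $P$. Let $\mathcal{L}$ be the closure of $P$ under a binary connective $\wedge$ and a unary connective $\neg$ (the set of formulas built from $P$ with $\wedge, \neg$). Then there exists a C-logics $\mathcal{C}': 2^{\mathcal{L}} \to 2^{\mathcal{L}}$ that satisfies $\wedge$-R, $\neg$-R1 and $\neg$-R2, such that $\mathcal{C}(A) = P \cap \mathcal{C}'(A)$ for every $A \subseteq P$.
   Context: A C-logics on a set $S$ is a map $\mathcal{D}: 2^S\to 2^S$ satisfying Inclusion ($A \subseteq \mathcal{D}(A)$) and Cumulativity ($A\subseteq B\subseteq \mathcal{D}(A) \Rightarrow \mathcal{D}(A)=\mathcal{D}(B)$) for all $A,B\subseteq S$. For $\mathcal{C}'$ on $\mathcal{L}$, writing $\mathcal{C}'(A, a_1,\dots,a_k)$ for $\mathcal{C}'(A\cup\{a_1,\dots,a_k\})$: $\wedge$-R: $\mathcal{C}'(A, a\wedge b) = \mathcal{C}'(A,a,b)$; $\neg$-R1: $\mathcal{C}'(A,a,\neg a) = \mathcal{L}$; $\neg$-R2: if $\mathcal{C}'(A,\neg a)=\mathcal{L}$ then $a\in\mathcal{C}'(A)$; for all $A\subseteq\mathcal{L}$, $a,b\in\mathcal{L}$. *)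

theory Defs
  imports Main
begin

datatype 'a form = Atom 'a | Conj "'a form" "'a form" | Neg "'a form"

fun atoms :: "'a form \<Rightarrow> 'a set" where
  "atoms (Atom p) = {p}"
| "atoms (Conj a b) = atoms a \<union> atoms b"
| "atoms (Neg a) = atoms a"

definition lang :: "'a set \<Rightarrow> 'a form set" where
  "lang P = {f. atoms f \<subseteq> P}"

definition c_logics :: "'b set \<Rightarrow> ('b set \<Rightarrow> 'b set) \<Rightarrow> bool" where
  "c_logics S D \<longleftrightarrow>
     (\<forall>A. A \<subseteq> S \<longrightarrow> D A \<subseteq> S) \<and>
     (\<forall>A. A \<subseteq> S \<longrightarrow> A \<subseteq> D A) \<and>
     (\<forall>A B. A \<subseteq> S \<longrightarrow> B \<subseteq> S \<longrightarrow> A \<subseteq> B \<longrightarrow> B \<subseteq> D A \<longrightarrow> D A = D B)"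

definition conj_R :: "'a set \<Rightarrow> ('a form set \<Rightarrow> 'a form set) \<Rightarrow> bool" where
  "conj_R P D \<longleftrightarrow> (\<forall>A a b. A \<subseteq> lang P \<longrightarrow> a \<in> lang P \<longrightarrow> b \<in> lang P \<longrightarrow>
     D (A \<union> {Conj a b}) = D (A \<union> {a, b}))"

definition neg_R1 :: "'a set \<Rightarrow> ('a form set \<Rightarrow> 'a form set) \<Rightarrow> bool" where
  "neg_R1 P D \<longleftrightarrow> (\<forall>A a. A \<subseteq> lang P \<longrightarrow> a \<in> lang P \<longrightarrow>
     D (A \<union> {a, Neg a}) = lang P)"

definition neg_R2 :: "'a set \<Rightarrow> ('a form set \<Rightarrow> 'a form set) \<Rightarrow> bool" where
  "neg_R2 P D \<longleftrightarrow> (\<forall>A a. A \<subseteq> lang P \<longrightarrow> a \<in> lang P \<longrightarrow>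
     D (A \<union> {Neg a}) = lang P \<longrightarrow> a \<in> D A)"

end

theory Submission
  imports Defs
begin

text \<open>Valuations are subsets of \<open>P\<close>. Let \<open>C'(B)\<close> be the set of formulas true in a selected
  part \<open>f M\<close> of the models \<open>M\<close> of \<open>B\<close>. Then \<open>\<and>\<close>-R holds for any \<open>f\<close>, \<open>\<not>\<close>-R1 when
  \<open>f {} = {}\<close>, \<open>\<not>\<close>-R2 when \<open>f M \<subseteq> M\<close> and \<open>f\<close> keeps nonempty sets nonempty, and \<open>C'\<close> is a
  C-logics when moreover \<open>f\<close> is cumulative: \<open>f M \<subseteq> M' \<subseteq> M\<close> implies \<open>f M' = f M\<close>.
  To represent \<open>C\<close>, let \<open>f\<close> select the valuations above \<open>C(F)\<close>, where \<open>F\<close> is the set of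
  atoms true throughout \<open>M\<close>, whenever these all lie in \<open>M\<close> (and \<open>M\<close> itself otherwise);
  cumulativity of \<open>C\<close> makes \<open>f\<close> cumulative. The models of a set \<open>A\<close> of atoms are the
  valuations above \<open>A\<close>, so the selected ones are those above \<open>C(A)\<close>, and the atoms true in
  all of them are exactly \<open>C(A)\<close>.\<close>

lemma c_logics_subset: "c_logics S D \<Longrightarrow> A \<subseteq> S \<Longrightarrow> D A \<subseteq> S"
  unfolding c_logics_def by metis

lemma c_logics_inclusion: "c_logics S D \<Longrightarrow> A \<subseteq> S \<Longrightarrow> A \<subseteq> D A"
  unfolding c_logics_def by metis

lemma c_logics_cumulative:
  "c_logics S D \<Longrightarrow> B \<subseteq> S \<Longrightarrow> A \<subseteq> B \<Longrightarrow> B \<subseteq> D A \<Longrightarrow> D A = D B"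
  unfolding c_logics_def by (metis order_trans)

fun holds :: "'a set \<Rightarrow> 'a form \<Rightarrow> bool" where
  "holds v (Atom p) = (p \<in> v)"
| "holds v (Conj a b) = (holds v a \<and> holds v b)"
| "holds v (Neg a) = (\<not> holds v a)"

definition models :: "'a set \<Rightarrow> 'a form set \<Rightarrow> 'a set set" where
  "models P B = {v. v \<subseteq> P \<and> (\<forall>b\<in>B. holds v b)}"

definition theory_of :: "'a set \<Rightarrow> 'a set set \<Rightarrow> 'a form set" where
  "theory_of P M = {a \<in> lang P. \<forall>v\<in>M. holds v a}"

definition selection_logic :: "'a set \<Rightarrow> ('a set set \<Rightarrow> 'a set set) \<Rightarrow> 'a form set \<Rightarrow> 'a form set" where
  "selection_logic P f B = theory_of P (f (models P B))"

lemma models_antimono: "A \<subseteq> B \<Longrightarrow> models P B \<subseteq> models P A"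
  unfolding models_def by auto

lemma theory_of_eq_lang_imp_empty:
  assumes "a \<in> lang P" and "theory_of P M = lang P"
  shows "M = {}"
proof -
  have "Conj a (Neg a) \<in> lang P"
    using assms(1) unfolding lang_def by simp
  then have "Conj a (Neg a) \<in> theory_of P M"
    using assms(2) by simp
  then show ?thesis
    unfolding theory_of_def by auto
qed

lemma c_logics_selection_logic:
  assumes shrinks: "\<And>M. f M \<subseteq> M"
    and cumulative: "\<And>M M'. f M \<subseteq> M' \<Longrightarrow> M' \<subseteq> M \<Longrightarrow> f M' = f M"
  shows "c_logics (lang P) (selection_logic P f)"
  unfolding c_logics_def
proof (intro conjI allI impI)
  fix A assume "A \<subseteq> lang P"
  show "selection_logic P f A \<subseteq> lang P"
    unfolding selection_logic_def theory_of_def by auto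
  show "A \<subseteq> selection_logic P f A"
    using \<open>A \<subseteq> lang P\<close> shrinks[of "models P A"]
    unfolding selection_logic_def theory_of_def models_def by blast
next
  fix A B assume "A \<subseteq> lang P" "B \<subseteq> lang P" "A \<subseteq> B" "B \<subseteq> selection_logic P f A"
  have "f (models P A) \<subseteq> models P B"
    using \<open>B \<subseteq> selection_logic P f A\<close> shrinks[of "models P A"]
    unfolding selection_logic_def theory_of_def models_def by blast
  then have "f (models P B) = f (models P A)"
    using cumulative models_antimono[OF \<open>A \<subseteq> B\<close>] by blast
  then show "selection_logic P f A = selection_logic P f B"
    unfolding selection_logic_def by simp
qed

lemma conj_R_selection_logic: "conj_R P (selection_logic P f)"
proof -
  have "models P (A \<union> {Conj a b}) = models P (A \<union> {a, b})" for A a b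
    unfolding models_def by auto
  then show ?thesis
    unfolding conj_R_def selection_logic_def by simp
qed

lemma neg_R1_selection_logic:
  assumes "f {} = {}"
  shows "neg_R1 P (selection_logic P f)"
proof -
  have "models P (A \<union> {a, Neg a}) = {}" for A a
    unfolding models_def by auto
  then show ?thesis
    using assms unfolding neg_R1_def selection_logic_def theory_of_def by simp
qed

lemma neg_R2_selection_logic:
  assumes shrinks: "\<And>M. f M \<subseteq> M" and nonempty: "\<And>M. M \<noteq> {} \<Longrightarrow> f M \<noteq> {}"
  shows "neg_R2 P (selection_logic P f)"
  unfolding neg_R2_def
proof (intro allI impI)
  fix A a
  assume "A \<subseteq> lang P" "a \<in> lang P"
    and inconsistent: "selection_logic P f (A \<union> {Neg a}) = lang P"
  have "f (models P (A \<union> {Neg a})) = {}"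
    using \<open>a \<in> lang P\<close> inconsistent unfolding selection_logic_def
    by (rule theory_of_eq_lang_imp_empty)
  then have "models P (A \<union> {Neg a}) = {}"
    using nonempty by blast
  then have "\<forall>v\<in>models P A. holds v a"
    unfolding models_def by auto
  then show "a \<in> selection_logic P f A"
    using \<open>a \<in> lang P\<close> shrinks[of "models P A"]
    unfolding selection_logic_def theory_of_def by blast
qed

definition common_atoms :: "'a set \<Rightarrow> 'a set set \<Rightarrow> 'a set" where
  "common_atoms P M = {p \<in> P. \<forall>v\<in>M. p \<in> v}"

definition valuations_above :: "'a set \<Rightarrow> 'a set \<Rightarrow> 'a set set" where
  "valuations_above P X = {v. X \<subseteq> v \<and> v \<subseteq> P}"

definition select :: "'a set \<Rightarrow> ('a set \<Rightarrow> 'a set) \<Rightarrow> 'a set set \<Rightarrow> 'a set set" where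
  "select P C M =
     (if valuations_above P (C (common_atoms P M)) \<subseteq> M
      then valuations_above P (C (common_atoms P M)) else M)"

lemma common_atoms_subset: "common_atoms P M \<subseteq> P"
  unfolding common_atoms_def by blast

lemma atoms_in_theory_of: "{p \<in> P. Atom p \<in> theory_of P M} = common_atoms P M"
  unfolding theory_of_def common_atoms_def lang_def by auto

lemma common_atoms_valuations_above:
  "X \<subseteq> P \<Longrightarrow> common_atoms P (valuations_above P X) = X"
  unfolding common_atoms_def valuations_above_def by blast

lemma models_Atom_image: "A \<subseteq> P \<Longrightarrow> models P (Atom ` A) = valuations_above P A"
  unfolding models_def valuations_above_def by auto

lemma select_subset: "select P C M \<subseteq> M"
  unfolding select_def by auto

lemma select_nonempty:
  assumes "c_logics P C" and "M \<noteq> {}"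
  shows "select P C M \<noteq> {}"
proof -
  have "C (common_atoms P M) \<subseteq> P"
    using assms(1) common_atoms_subset by (rule c_logics_subset)
  then have "C (common_atoms P M) \<in> valuations_above P (C (common_atoms P M))"
    unfolding valuations_above_def by blast
  then show ?thesis
    using assms(2) unfolding select_def by auto
qed

lemma select_cumulative:
  assumes C: "c_logics P C" and "select P C M \<subseteq> M'" and "M' \<subseteq> M"
  shows "select P C M' = select P C M"
proof (cases "valuations_above P (C (common_atoms P M)) \<subseteq> M")
  case True
  let ?F = "common_atoms P M" and ?F' = "common_atoms P M'"
  have selected: "select P C M = valuations_above P (C ?F)"
    using True unfolding select_def by simp
  have "?F' \<subseteq> P"
    by (rule common_atoms_subset)
  moreover have "?F \<subseteq> ?F'"
    using \<open>M' \<subseteq> M\<close> unfolding common_atoms_def by blast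
  moreover have "?F' \<subseteq> C ?F"
  proof -
    have "?F' \<subseteq> common_atoms P (valuations_above P (C ?F))"
      using \<open>select P C M \<subseteq> M'\<close> selected unfolding common_atoms_def by blast
    also have "\<dots> = C ?F"
      using c_logics_subset[OF C common_atoms_subset]
      by (rule common_atoms_valuations_above)
    finally show ?thesis .
  qed
  ultimately have "C ?F = C ?F'"
    by (rule c_logics_cumulative[OF C])
  then show ?thesis
    using selected \<open>select P C M \<subseteq> M'\<close> unfolding select_def by simp
next
  case False
  then show ?thesis
    using assms(2,3) unfolding select_def by simp
qed

lemma select_valuations_above:
  assumes C: "c_logics P C" and "A \<subseteq> P"
  shows "select P C (valuations_above P A) = valuations_above P (C A)"
proof -
  have "valuations_above P (C A) \<subseteq> valuations_above P A"
    using c_logics_inclusion[OF C \<open>A \<subseteq> P\<close>] unfolding valuations_above_def by blast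
  then show ?thesis
    unfolding select_def common_atoms_valuations_above[OF \<open>A \<subseteq> P\<close>] by simp
qed

theorem theorem6:
  fixes P :: "'a set" and C :: "'a set \<Rightarrow> 'a set"
  assumes "c_logics P C"
  shows "\<exists>C' :: 'a form set \<Rightarrow> 'a form set.
           c_logics (lang P) C' \<and> conj_R P C' \<and> neg_R1 P C' \<and> neg_R2 P C' \<and>
           (\<forall>A. A \<subseteq> P \<longrightarrow> C A = {p \<in> P. Atom p \<in> C' (Atom ` A)})"
proof (intro exI conjI allI impI)
  let ?C' = "selection_logic P (select P C)"
  show "c_logics (lang P) ?C'"
    using select_subset select_cumulative[OF assms] by (rule c_logics_selection_logic)
  show "conj_R P ?C'"
    by (rule conj_R_selection_logic)
  show "neg_R1 P ?C'"
    using select_subset by (blast intro: neg_R1_selection_logic)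
  show "neg_R2 P ?C'"
    using select_subset select_nonempty[OF assms] by (rule neg_R2_selection_logic)
  fix A assume "A \<subseteq> P"
  have "C A \<subseteq> P"
    using c_logics_subset[OF assms \<open>A \<subseteq> P\<close>] .
  have "select P C (models P (Atom ` A)) = valuations_above P (C A)"
    using select_valuations_above[OF assms \<open>A \<subseteq> P\<close>]
    by (simp only: models_Atom_image[OF \<open>A \<subseteq> P\<close>])
  then have "common_atoms P (select P C (models P (Atom ` A))) = C A"
    by (simp only: common_atoms_valuations_above[OF \<open>C A \<subseteq> P\<close>])
  then show "C A = {p \<in> P. Atom p \<in> ?C' (Atom ` A)}"
    by (simp only: selection_logic_def atoms_in_theory_of)
qed

end
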